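(* Let $\gamma>0$, $\bar\sigma>0$, $\gamma_0\in(0,\gamma)$ and $n_0$ a positive integer. Let $C(x;n_0)=\mathrm E\left[\inf\{n\ge n_0:\bar Z(n)<x\}\right]$ for $x>0$, where $\bar Z(n)$ is the average of the first $n$ terms of an i.i.d. standard normal sequence, and let $n_g=C\left(\frac{\gamma-\gamma_0}{\bar\sigma};n_0\right)-n_0$. Then $n_g\le\beta e^{-\kappa n_0}$, where $\kappa=\frac{(\gamma-\gamma_0)^2}{2\bar\sigma^2}$ and $\beta=(1-e^{-\kappa})^{-1}$. *)

theory Defs
  imports "HOL-Probability.Probability"
begin

definition sample_mean :: "(nat \<Rightarrow> 'a \<Rightarrow> real) \<Rightarrow> nat \<Rightarrow> 'a \<Rightarrow> real" where
  "sample_mean X n \<omega> = (\<Sum>i<n. X i \<omega>) / real n"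

text \<open>The stopping time inf{n >= n0 : Zbar(n) < x}, valued in extended naturals
  (infimum of the empty set is infinity).\<close>
definition hit_time :: "(nat \<Rightarrow> 'a \<Rightarrow> real) \<Rightarrow> real \<Rightarrow> nat \<Rightarrow> 'a \<Rightarrow> enat" where
  "hit_time X x n0 \<omega> = (INF n \<in> {n. n0 \<le> n \<and> sample_mean X n \<omega> < x}. enat n)"

definition C_exp :: "'a measure \<Rightarrow> (nat \<Rightarrow> 'a \<Rightarrow> real) \<Rightarrow> real \<Rightarrow> nat \<Rightarrow> ennreal" where
  "C_exp M X x n0 = (\<integral>\<^sup>+ \<omega>. ennreal_of_enat (hit_time X x n0 \<omega>) \<partial>M)"

end

theory Submission imports Defs begin

text \<open>
  The hitting time is at most n0 plus the number of indices n >= n0 at which the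
  sample mean is still >= x, so C(x; n0) - n0 <= sum over n >= n0 of P(Zbar(n) >= x).
  Since Zbar(n) is N(0, 1/n), the Gaussian tail bound gives P(Zbar(n) >= x) <= exp(-kappa n)
  with kappa = x^2/2, and the geometric series sums to beta exp(-kappa n0).
\<close>

lemma std_normal_upper_tail_le:
  assumes Y: "distributed M lborel Y (\<lambda>x. ennreal (std_normal_density x))" and "a \<ge> 0"
  shows "emeasure M {\<omega>\<in>space M. a \<le> Y \<omega>} \<le> ennreal (exp (- a\<^sup>2 / 2))"
proof -
  have density_shift: "std_normal_density y \<le> exp (- a\<^sup>2 / 2) * normal_density a 1 y" if "a \<le> y" for y
  proof -
    have "- y\<^sup>2 / 2 \<le> - a\<^sup>2 / 2 + (- (y - a)\<^sup>2 / 2)"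
      using that \<open>a \<ge> 0\<close> by (simp add: power2_eq_square algebra_simps) (metis mult_left_mono)
    then show ?thesis
      unfolding std_normal_density_def normal_density_def by (simp add: mult_exp_exp divide_right_mono)
  qed
  have "{\<omega>\<in>space M. a \<le> Y \<omega>} = Y -` {a..} \<inter> space M" by auto
  then have "emeasure M {\<omega>\<in>space M. a \<le> Y \<omega>}
      = (\<integral>\<^sup>+y. ennreal (std_normal_density y) * indicator {a..} y \<partial>lborel)"
    using distributed_emeasure[OF Y, of "{a..}"] by simp
  also have "\<dots> \<le> (\<integral>\<^sup>+y. ennreal (exp (- a\<^sup>2 / 2)) * ennreal (normal_density a 1 y) \<partial>lborel)"
    using density_shift
    by (intro nn_integral_mono) (simp add: indicator_def ennreal_mult''[symmetric] ennreal_leI)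
  also have "\<dots> = ennreal (exp (- a\<^sup>2 / 2)) * (\<integral>\<^sup>+y. ennreal (normal_density a 1 y) \<partial>lborel)"
    by (rule nn_integral_cmult) simp
  also have "(\<integral>\<^sup>+y. ennreal (normal_density a 1 y) \<partial>lborel) = 1"
    by (subst nn_integral_eq_integral) auto
  finally show ?thesis by simp
qed

lemma sample_mean_upper_tail_le:
  assumes "prob_space M"
    and "prob_space.indep_vars M (\<lambda>_. borel) X UNIV"
    and "\<And>i. distributed M lborel (X i) (\<lambda>x. ennreal (std_normal_density x))"
    and "x \<ge> 0" and "n \<ge> 1"
  shows "emeasure M {\<omega>\<in>space M. x \<le> sample_mean X n \<omega>} \<le> ennreal (exp (- x\<^sup>2 / 2 * real n))"
proof -
  interpret prob_space M by fact
  have "distributed M lborel (\<lambda>\<omega>. \<Sum>i<n. X i \<omega>)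
      (normal_density (\<Sum>i<n. 0) (sqrt (\<Sum>i<n. 1\<^sup>2)))"
    using assms by (intro sum_indep_normal indep_vars_subset[OF assms(2)]) (auto simp: lessThan_empty_iff)
  then have "distributed M lborel (\<lambda>\<omega>. \<Sum>i<n. X i \<omega>) (normal_density 0 (sqrt n))" by simp
  then have std: "distributed M lborel (\<lambda>\<omega>. (\<Sum>i<n. X i \<omega>) / sqrt n) std_normal_density"
    using normal_standard_normal_convert[of "sqrt n"] \<open>n \<ge> 1\<close> by simp
  have "x \<le> s / real n \<longleftrightarrow> x * sqrt n \<le> s / sqrt n" for s
  proof -
    have "real n = sqrt n * sqrt n" by simp
    then show ?thesis using \<open>n \<ge> 1\<close> by (simp add: field_simps)
  qed
  then have "{\<omega>\<in>space M. x \<le> sample_mean X n \<omega>}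
      = {\<omega>\<in>space M. x * sqrt n \<le> (\<Sum>i<n. X i \<omega>) / sqrt n}"
    by (simp add: sample_mean_def)
  also have "emeasure M \<dots> \<le> ennreal (exp (- (x * sqrt n)\<^sup>2 / 2))"
    using \<open>x \<ge> 0\<close> by (intro std_normal_upper_tail_le[OF std]) simp
  finally show ?thesis by (simp add: power_mult_distrib)
qed

lemma first_index_le_count_failures:
  "ennreal_of_enat (INF n \<in> {n. n\<^sub>0 \<le> n \<and> P n}. enat n)
     \<le> of_nat n\<^sub>0 + (\<Sum>k. indicator {k. \<not> P (k + n\<^sub>0)} k)"
  (is "ennreal_of_enat ?T \<le> ?bound")
proof -
  have nat_le_bound: "of_nat m \<le> ?bound" if "enat m \<le> ?T" for m
  proof (cases "m \<le> n\<^sub>0")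
    case True
    then show ?thesis by (simp add: add_increasing2)
  next
    case False
    have fails: "\<not> P (k + n\<^sub>0)" if "k < m - n\<^sub>0" for k
    proof
      assume "P (k + n\<^sub>0)"
      then have "?T \<le> enat (k + n\<^sub>0)" by (intro INF_lower) simp
      with \<open>enat m \<le> ?T\<close> have "enat m \<le> enat (k + n\<^sub>0)" by (rule order_trans)
      with \<open>k < m - n\<^sub>0\<close> show False by simp
    qed
    have "of_nat (m - n\<^sub>0) = (\<Sum>k<m - n\<^sub>0. indicator {k. \<not> P (k + n\<^sub>0)} k :: ennreal)"
      using fails by simp
    also have "\<dots> \<le> (\<Sum>k. indicator {k. \<not> P (k + n\<^sub>0)} k)"
      by (intro sum_le_suminf) auto
    finally have "of_nat n\<^sub>0 + of_nat (m - n\<^sub>0) \<le> ?bound" by (rule add_left_mono)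
    then show ?thesis using False by (simp flip: of_nat_add)
  qed
  show ?thesis
  proof (cases ?T)
    case (enat m)
    then show ?thesis using nat_le_bound[of m] by simp
  next
    case infinity
    then have "(SUP m. of_nat m :: ennreal) \<le> ?bound" by (intro SUP_least nat_le_bound) simp
    then show ?thesis using infinity by (simp add: ennreal_SUP_of_nat_eq_top)
  qed
qed

lemma C_exp_le_tail_sum:
  assumes "prob_space M" and "\<And>i. X i \<in> borel_measurable M"
  shows "C_exp M X x n\<^sub>0
    \<le> of_nat n\<^sub>0 + (\<Sum>k. emeasure M {\<omega>\<in>space M. x \<le> sample_mean X (k + n\<^sub>0) \<omega>})"
proof -
  interpret prob_space M by fact
  have [measurable]: "X i \<in> borel_measurable M" for i by fact
  have [measurable]: "sample_mean X n \<in> borel_measurable M" for n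
    unfolding sample_mean_def[abs_def] by measurable
  have "C_exp M X x n\<^sub>0
      \<le> (\<integral>\<^sup>+\<omega>. of_nat n\<^sub>0 + (\<Sum>k. indicator {\<omega>\<in>space M. x \<le> sample_mean X (k + n\<^sub>0) \<omega>} \<omega>) \<partial>M)"
    unfolding C_exp_def hit_time_def
    by (intro nn_integral_mono order.trans[OF first_index_le_count_failures])
       (simp add: indicator_def not_less)
  also have "\<dots> = of_nat n\<^sub>0 + (\<Sum>k. emeasure M {\<omega>\<in>space M. x \<le> sample_mean X (k + n\<^sub>0) \<omega>})"
    by (subst nn_integral_add) (auto simp: nn_integral_suminf emeasure_space_1)
  finally show ?thesis .
qed

lemma suminf_exp_shifted_geometric:
  assumes "\<kappa> > 0"
  shows "(\<Sum>k. ennreal (exp (- \<kappa> * real (k + n\<^sub>0))))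
    = ennreal (1 / (1 - exp (- \<kappa>)) * exp (- \<kappa> * real n\<^sub>0))"
proof -
  have geometric: "exp (- \<kappa> * real (k + n\<^sub>0)) = exp (- \<kappa> * real n\<^sub>0) * exp (- \<kappa>) ^ k" for k
    by (simp add: exp_of_nat_mult[symmetric] exp_add[symmetric] algebra_simps)
  have summable: "summable (\<lambda>k. exp (- \<kappa> * real n\<^sub>0) * exp (- \<kappa>) ^ k)"
    using assms by (intro summable_mult summable_geometric) simp
  have "(\<Sum>k. ennreal (exp (- \<kappa> * real (k + n\<^sub>0))))
      = ennreal (\<Sum>k. exp (- \<kappa> * real n\<^sub>0) * exp (- \<kappa>) ^ k)"
    unfolding geometric using summable by (intro suminf_ennreal2) auto
  also have "(\<Sum>k. exp (- \<kappa> * real n\<^sub>0) * exp (- \<kappa>) ^ k) = exp (- \<kappa> * real n\<^sub>0) / (1 - exp (- \<kappa>))"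
    using assms by (simp add: suminf_mult suminf_geometric summable_geometric)
  finally show ?thesis by simp
qed

theorem lemma6:
  fixes M :: "'a measure" and X :: "nat \<Rightarrow> 'a \<Rightarrow> real"
    and \<gamma> \<sigma> \<gamma>\<^sub>0 :: real and n\<^sub>0 :: nat
  assumes "prob_space M"
    and "prob_space.indep_vars M (\<lambda>_. borel) X UNIV"
    and "\<And>i. distributed M lborel (X i) (\<lambda>x. ennreal (std_normal_density x))"
    and "\<gamma> > 0" and "\<sigma> > 0" and "0 < \<gamma>\<^sub>0" and "\<gamma>\<^sub>0 < \<gamma>" and "n\<^sub>0 \<ge> 1"
  shows "let \<kappa> = (\<gamma> - \<gamma>\<^sub>0)\<^sup>2 / (2 * \<sigma>\<^sup>2);
             \<beta> = 1 / (1 - exp (- \<kappa>));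
             n\<^sub>g = C_exp M X ((\<gamma> - \<gamma>\<^sub>0) / \<sigma>) n\<^sub>0 - ennreal (real n\<^sub>0)
         in n\<^sub>g \<le> ennreal (\<beta> * exp (- \<kappa> * real n\<^sub>0))"
proof -
  define x where "x = (\<gamma> - \<gamma>\<^sub>0) / \<sigma>"
  define \<kappa> where "\<kappa> = (\<gamma> - \<gamma>\<^sub>0)\<^sup>2 / (2 * \<sigma>\<^sup>2)"
  have "x > 0" using assms unfolding x_def by simp
  have \<kappa>_eq: "\<kappa> = x\<^sup>2 / 2" unfolding \<kappa>_def x_def by (simp add: power_divide)
  have "C_exp M X x n\<^sub>0
      \<le> of_nat n\<^sub>0 + (\<Sum>k. emeasure M {\<omega>\<in>space M. x \<le> sample_mean X (k + n\<^sub>0) \<omega>})"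
    using assms(1,3) distributed_measurable by (intro C_exp_le_tail_sum) fastforce+
  also have "\<dots> \<le> of_nat n\<^sub>0 + (\<Sum>k. ennreal (exp (- \<kappa> * real (k + n\<^sub>0))))"
  proof (intro add_left_mono suminf_le summableI)
    fix k
    show "emeasure M {\<omega>\<in>space M. x \<le> sample_mean X (k + n\<^sub>0) \<omega>}
        \<le> ennreal (exp (- \<kappa> * real (k + n\<^sub>0)))"
      using sample_mean_upper_tail_le[OF assms(1-3), of x "k + n\<^sub>0"] \<open>x > 0\<close> \<open>n\<^sub>0 \<ge> 1\<close>
      by (simp add: \<kappa>_eq)
  qed
  also have "\<dots> = of_nat n\<^sub>0 + ennreal (1 / (1 - exp (- \<kappa>)) * exp (- \<kappa> * real n\<^sub>0))"
    using \<open>x > 0\<close> by (simp only: \<kappa>_eq suminf_exp_shifted_geometric zero_less_power2 half_gt_zero)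
  finally show ?thesis
    unfolding Let_def \<kappa>_def[symmetric] x_def[symmetric]
    by (simp add: ennreal_minus_le_iff ennreal_of_nat_eq_real_of_nat)
qed

end
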